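(* Consider the following insertion-only procedure for maintaining a coloring of a set $S$ of objects, where $S$ is partitioned into sets $S_0,\ldots,S_\ell$, $\ell=\lceil\log n\rceil$, each in one of the states empty, full, or in migration, and where for each $i$ there are $\ell-i+1$ color sets $C(i,t)$, $0\le t\le \ell-i$, each of $\gamma_{\mathrm{um}}(2^i)$ colors. To insert an object $s$: (1) let $i$ be the smallest index with $S_i$ empty (if $i=\ell+1$ a new set is introduced and $\ell$ is redefined); (2) set $S_i:=\{s\}\cup S_0\cup\cdots\cup S_{i-1}$, mark $S_0,\ldots,S_{i-1}$ empty and $S_i$ in migration; (3) take an unused color set $C(i,t)$ and compute a unimax coloring of $S_i$ with it, whose colors are called final colors; only $s$ is given its final color now; (4) for each set $S_k$ in migration, recolor to its final color one object of $S_k$ whose current color differs from its final color and whose final color is maximal among such objects; if all objects of $S_k$ now have their final color, mark $S_k$ full. Then whenever an object is inserted and the first empty set is $S_i$, the sets $S_0,\ldots,S_{i-1}$ are full.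
   Context: Initially $S$ is empty and all sets are empty. A unimax coloring of a set of objects (regions with respect to points, or points with respect to ranges) is a coloring by integers such that for every point (resp. range) $q$ related to at least one object, the maximum color among the objects related to $q$ is attained by exactly one of them. $\gamma_{\mathrm{um}}$ is a non-decreasing function such that every $m$ objects of the family admit a unimax coloring with $\gamma_{\mathrm{um}}(m)$ colors. *)

theory Defs
  imports Complex_Main
begin

text \<open>A unimax coloring of a finite set X of objects with respect to the relation rel
  (rel q x: point/range q is related to object x): for every q related to at least one
  object of X, the maximum color among the objects of X related to q is attained by
  exactly one of them.\<close>
definition unimax :: "('q \<Rightarrow> 'a \<Rightarrow> bool) \<Rightarrow> 'a set \<Rightarrow> ('a \<Rightarrow> int) \<Rightarrow> bool" where
  "unimax rel X c \<longleftrightarrow>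
     (\<forall>q. (\<exists>x\<in>X. rel q x) \<longrightarrow>
        (\<exists>!x. x \<in> X \<and> rel q x \<and> c x = Max (c ` {y\<in>X. rel q y})))"

datatype status = Empty | Full | Migr

text \<open>State of the procedure: current value of ell, the sets S_j, their states,
  the current color of every object and the final color of every object
  (w.r.t. the unimax coloring computed for the set containing it).\<close>
record 'a st =
  lev  :: nat
  sets :: "nat \<Rightarrow> 'a set"
  stat :: "nat \<Rightarrow> status"
  cur  :: "'a \<Rightarrow> int"
  fin  :: "'a \<Rightarrow> int"

definition objs :: "('a, 'b) st_scheme \<Rightarrow> 'a set" where
  "objs \<sigma> = (\<Union>j\<le>lev \<sigma>. sets \<sigma> j)"

definition first_empty :: "('a, 'b) st_scheme \<Rightarrow> nat" where
  "first_empty \<sigma> = (if \<exists>i\<le>lev \<sigma>. stat \<sigma> i = Empty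
                      then (LEAST i. i \<le> lev \<sigma> \<and> stat \<sigma> i = Empty)
                      else Suc (lev \<sigma>))"

definition init_st :: "nat \<Rightarrow> 'a st" where
  "init_st n = \<lparr> lev = nat \<lceil>log 2 (real n)\<rceil>, sets = (\<lambda>_. {}), stat = (\<lambda>_. Empty),
                 cur = (\<lambda>_. 0), fin = (\<lambda>_. 0) \<rparr>"

text \<open>C i t is the color set C(i,t).  Nondeterminism: choice of the unused color set,
  of the unimax coloring, and of the recolored object among ties.\<close>
definition insert_step ::
  "('q \<Rightarrow> 'a \<Rightarrow> bool) \<Rightarrow> (nat \<Rightarrow> nat \<Rightarrow> int set) \<Rightarrow> 'a \<Rightarrow> 'a st \<Rightarrow> 'a st \<Rightarrow> bool" where
  "insert_step rel C s \<sigma> \<sigma>' \<longleftrightarrow>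
    s \<notin> objs \<sigma> \<and>
    (let i = first_empty \<sigma>;
         L = max (lev \<sigma>) i;
         X = insert s (\<Union>j<i. sets \<sigma> j);
         sets1 = (\<lambda>j. if j < i then {} else if j = i then X else sets \<sigma> j);
         stat1 = (\<lambda>j. if j < i then Empty else if j = i then Migr else stat \<sigma> j)
     in \<exists>t f pick.
          t \<le> L - i \<and>
          (\<forall>x\<in>objs \<sigma>. cur \<sigma> x \<notin> C i t) \<and>
          unimax rel X f \<and> f ` X \<subseteq> C i t \<and>
          (let fin1 = (\<lambda>x. if x \<in> X then f x else fin \<sigma> x);
               cur1 = (cur \<sigma>)(s := f s);
               D = (\<lambda>k. {x \<in> sets1 k. cur1 x \<noteq> fin1 x});
               cur2 = (\<lambda>x. if \<exists>k\<le>L. pick k = Some x then fin1 x else cur1 x)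
           in (\<forall>k. (pick k = None) \<longleftrightarrow> (k > L \<or> stat1 k \<noteq> Migr \<or> D k = {})) \<and>
              (\<forall>k x. pick k = Some x \<longrightarrow> x \<in> D k \<and> (\<forall>y\<in>D k. fin1 y \<le> fin1 x)) \<and>
              \<sigma>' = \<lparr> lev = L, sets = sets1,
                     stat = (\<lambda>k. if stat1 k = Migr \<and> (\<forall>x\<in>sets1 k. cur2 x = fin1 x)
                                 then Full else stat1 k),
                     cur = cur2, fin = fin1 \<rparr>))"

definition reachable ::
  "('q \<Rightarrow> 'a \<Rightarrow> bool) \<Rightarrow> (nat \<Rightarrow> nat \<Rightarrow> int set) \<Rightarrow> nat \<Rightarrow> 'a st \<Rightarrow> bool" where
  "reachable rel C n \<sigma> \<longleftrightarrow>
     (\<lambda>a b. \<exists>s. insert_step rel C s a b)\<^sup>*\<^sup>* (init_st n) \<sigma>"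

end

theory Submission
  imports Defs
begin

text \<open>The sets S_0, S_1, \<dots> behave like the digits of a binary counter: a nonempty S_j
  has exactly 2^j objects, and an insertion merges the nonempty prefix S_0, \<dots>, S_{i-1}
  together with the new object into the first empty set S_i.  While S_j migrates, the number
  of its miscolored objects plus the number of objects stored below j stays below 2^j:
  each later insertion adds one object below j but also recolors one object of S_j.
  When all sets below S_j are nonempty they hold 2^j - 1 objects, which leaves no room
  for a miscolored object in S_j, so S_j is full.\<close>

definition miscolored :: "('a, 'b) st_scheme \<Rightarrow> nat \<Rightarrow> 'a set" where
  "miscolored \<sigma> j = {x \<in> sets \<sigma> j. cur \<sigma> x \<noteq> fin \<sigma> x}"

definition counter_invariant :: "('a, 'b) st_scheme \<Rightarrow> bool" where
  "counter_invariant \<sigma> \<longleftrightarrow>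
    (\<forall>j. stat \<sigma> j = Empty \<longrightarrow> sets \<sigma> j = {}) \<and>
    (\<forall>j. stat \<sigma> j \<noteq> Empty \<longrightarrow> finite (sets \<sigma> j) \<and> card (sets \<sigma> j) = 2 ^ j) \<and>
    (\<forall>j. lev \<sigma> < j \<longrightarrow> stat \<sigma> j = Empty) \<and>
    (\<forall>j k. j \<noteq> k \<longrightarrow> sets \<sigma> j \<inter> sets \<sigma> k = {}) \<and>
    (\<forall>j. stat \<sigma> j = Migr \<longrightarrow> miscolored \<sigma> j \<noteq> {} \<and>
        card (miscolored \<sigma> j) + (\<Sum>k<j. card (sets \<sigma> k)) < 2 ^ j)"

lemma sets_eq_empty_if_Empty:
  "counter_invariant \<sigma> \<Longrightarrow> stat \<sigma> j = Empty \<Longrightarrow> sets \<sigma> j = {}"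
  by (simp add: counter_invariant_def)

lemma card_sets_if_not_Empty:
  "counter_invariant \<sigma> \<Longrightarrow> stat \<sigma> j \<noteq> Empty \<Longrightarrow> card (sets \<sigma> j) = 2 ^ j"
  by (simp add: counter_invariant_def)

lemma finite_sets: "counter_invariant \<sigma> \<Longrightarrow> finite (sets \<sigma> j)"
  by (cases "stat \<sigma> j = Empty") (simp_all add: counter_invariant_def)

lemma stat_Empty_above_lev: "counter_invariant \<sigma> \<Longrightarrow> lev \<sigma> < j \<Longrightarrow> stat \<sigma> j = Empty"
  by (simp add: counter_invariant_def)

lemma sets_disjoint: "counter_invariant \<sigma> \<Longrightarrow> j \<noteq> k \<Longrightarrow> sets \<sigma> j \<inter> sets \<sigma> k = {}"
  by (simp add: counter_invariant_def)

lemma migrating_backlog: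
  "counter_invariant \<sigma> \<Longrightarrow> stat \<sigma> j = Migr \<Longrightarrow>
    miscolored \<sigma> j \<noteq> {} \<and> card (miscolored \<sigma> j) + (\<Sum>k<j. card (sets \<sigma> k)) < 2 ^ j"
  by (simp add: counter_invariant_def)

lemma counter_invariant_init_st: "counter_invariant (init_st n)"
  by (simp add: counter_invariant_def init_st_def miscolored_def)

lemma Suc_sum_power2_lessThan: "Suc (\<Sum>k<n. 2 ^ k) = (2::nat) ^ n"
  by (induction n) auto

lemma card_less_after_fixing:
  assumes "finite S" "x \<in> S" "c x \<noteq> f x" "c' x = f x" "\<And>y. c' y = f y \<or> c' y = c y"
  shows "card {y \<in> S. c' y \<noteq> f y} < card {y \<in> S. c y \<noteq> f y}"
  using assms by (intro psubset_card_mono) force+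

lemma stat_less_first_empty:
  assumes "k < first_empty \<sigma>"
  shows "stat \<sigma> k \<noteq> Empty"
proof (cases "\<exists>i\<le>lev \<sigma>. stat \<sigma> i = Empty")
  case True
  let ?i = "LEAST i. i \<le> lev \<sigma> \<and> stat \<sigma> i = Empty"
  from True have "?i \<le> lev \<sigma>"
    by (metis (mono_tags, lifting) LeastI_ex)
  moreover from True assms have "k < ?i"
    by (simp add: first_empty_def)
  ultimately show ?thesis
    using not_less_Least[of k] by fastforce
next
  case False
  with assms show ?thesis
    by (auto simp: first_empty_def)
qed

lemma stat_first_empty:
  assumes "counter_invariant \<sigma>"
  shows "stat \<sigma> (first_empty \<sigma>) = Empty"
  using stat_Empty_above_lev[OF assms] LeastI_ex[of "\<lambda>i. i \<le> lev \<sigma> \<and> stat \<sigma> i = Empty"]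
  by (auto simp: first_empty_def)

lemma sum_card_sets_below_first_empty:
  assumes "counter_invariant \<sigma>" "j \<le> first_empty \<sigma>"
  shows "Suc (\<Sum>k<j. card (sets \<sigma> k)) = 2 ^ j"
proof -
  have "stat \<sigma> k \<noteq> Empty" if "k < j" for k
    using that assms(2) by (intro stat_less_first_empty) simp
  then have "(\<Sum>k<j. card (sets \<sigma> k)) = (\<Sum>k<j. 2 ^ k)"
    by (intro sum.cong) (simp_all add: card_sets_if_not_Empty[OF assms(1)])
  then show ?thesis
    by (simp add: Suc_sum_power2_lessThan)
qed

lemma full_below_first_empty:
  assumes inv: "counter_invariant \<sigma>" and j: "j < first_empty \<sigma>"
  shows "stat \<sigma> j = Full"
proof (cases "stat \<sigma> j")
  case Migr
  have "finite (miscolored \<sigma> j)"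
    using finite_sets[OF inv] by (simp add: miscolored_def)
  moreover have "miscolored \<sigma> j \<noteq> {}" "card (miscolored \<sigma> j) + (\<Sum>k<j. card (sets \<sigma> k)) < 2 ^ j"
    using migrating_backlog[OF inv Migr] by auto
  ultimately have False
    using sum_card_sets_below_first_empty[OF inv, of j] j card_gt_0_iff[of "miscolored \<sigma> j"]
    by linarith
  then show ?thesis ..
qed (use stat_less_first_empty[OF j] in auto)

definition merged_set :: "'a \<Rightarrow> ('a, 'b) st_scheme \<Rightarrow> 'a set" where
  "merged_set s \<sigma> = insert s (\<Union>j<first_empty \<sigma>. sets \<sigma> j)"

definition merged_sets :: "'a \<Rightarrow> ('a, 'b) st_scheme \<Rightarrow> nat \<Rightarrow> 'a set" where
  "merged_sets s \<sigma> j =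
     (if j < first_empty \<sigma> then {} else if j = first_empty \<sigma> then merged_set s \<sigma> else sets \<sigma> j)"

definition merged_stat :: "('a, 'b) st_scheme \<Rightarrow> nat \<Rightarrow> status" where
  "merged_stat \<sigma> j =
     (if j < first_empty \<sigma> then Empty else if j = first_empty \<sigma> then Migr else stat \<sigma> j)"

text \<open>Here cur1 is the coloring right after s receives its final color, before the
  recolorings of step (4); the constraints on the color set and on the unimax coloring are
  dropped, since the counting argument never uses them.\<close>

lemma insert_stepE:
  assumes "insert_step rel C s \<sigma> \<sigma>'"
  obtains cur1 pick where
    "s \<notin> objs \<sigma>"
    "lev \<sigma>' = max (lev \<sigma>) (first_empty \<sigma>)"
    "sets \<sigma>' = merged_sets s \<sigma>"
    "\<And>x. x \<notin> merged_set s \<sigma> \<Longrightarrow> fin \<sigma>' x = fin \<sigma> x"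
    "cur1 = (cur \<sigma>)(s := fin \<sigma>' s)"
    "cur \<sigma>' = (\<lambda>x. if \<exists>k\<le>lev \<sigma>'. pick k = Some x then fin \<sigma>' x else cur1 x)"
    "\<And>k. pick k = None \<longleftrightarrow>
       lev \<sigma>' < k \<or> merged_stat \<sigma> k \<noteq> Migr \<or> {x \<in> merged_sets s \<sigma> k. cur1 x \<noteq> fin \<sigma>' x} = {}"
    "\<And>k x. pick k = Some x \<Longrightarrow> x \<in> merged_sets s \<sigma> k \<and> cur1 x \<noteq> fin \<sigma>' x"
    "stat \<sigma>' = (\<lambda>k. if merged_stat \<sigma> k = Migr \<and> miscolored \<sigma>' k = {} then Full else merged_stat \<sigma> k)"
proof -
  let ?L = "max (lev \<sigma>) (first_empty \<sigma>)"
  obtain f pick where s: "s \<notin> objs \<sigma>"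
    and pick_None: "\<forall>k. pick k = None \<longleftrightarrow> ?L < k \<or> merged_stat \<sigma> k \<noteq> Migr \<or>
      {x \<in> merged_sets s \<sigma> k. ((cur \<sigma>)(s := f s)) x \<noteq> (if x \<in> merged_set s \<sigma> then f x else fin \<sigma> x)} = {}"
    and pick_Some: "\<forall>k x. pick k = Some x \<longrightarrow> x \<in> merged_sets s \<sigma> k \<and>
      ((cur \<sigma>)(s := f s)) x \<noteq> (if x \<in> merged_set s \<sigma> then f x else fin \<sigma> x)"
    and \<sigma>': "\<sigma>' = \<lparr>lev = ?L, sets = merged_sets s \<sigma>,
      stat = (\<lambda>k. if merged_stat \<sigma> k = Migr \<and> (\<forall>x\<in>merged_sets s \<sigma> k.
          (if \<exists>k\<le>?L. pick k = Some x then (if x \<in> merged_set s \<sigma> then f x else fin \<sigma> x)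
           else ((cur \<sigma>)(s := f s)) x) = (if x \<in> merged_set s \<sigma> then f x else fin \<sigma> x))
        then Full else merged_stat \<sigma> k),
      cur = (\<lambda>x. if \<exists>k\<le>?L. pick k = Some x then (if x \<in> merged_set s \<sigma> then f x else fin \<sigma> x)
          else ((cur \<sigma>)(s := f s)) x),
      fin = (\<lambda>x. if x \<in> merged_set s \<sigma> then f x else fin \<sigma> x)\<rparr>"
    using assms unfolding insert_step_def Let_def merged_set_def merged_sets_def merged_stat_def
    by blast
  have "s \<in> merged_set s \<sigma>"
    by (simp add: merged_set_def)
  with s pick_None pick_Some show ?thesis
    by (intro that[of "(cur \<sigma>)(s := f s)" pick]) (auto simp: \<sigma>' miscolored_def fun_eq_iff)
qed

lemma not_in_sets_if_not_in_objs:
  assumes "counter_invariant \<sigma>" "s \<notin> objs \<sigma>"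
  shows "s \<notin> sets \<sigma> k"
proof (cases "k \<le> lev \<sigma>")
  case True
  with assms(2) show ?thesis
    by (auto simp: objs_def)
next
  case False
  then show ?thesis
    using sets_eq_empty_if_Empty[OF assms(1) stat_Empty_above_lev[OF assms(1)]] by simp
qed

lemma card_merged_set:
  assumes inv: "counter_invariant \<sigma>" and s: "s \<notin> objs \<sigma>"
  shows "finite (merged_set s \<sigma>)" "card (merged_set s \<sigma>) = 2 ^ first_empty \<sigma>"
proof -
  let ?U = "\<Union>j<first_empty \<sigma>. sets \<sigma> j"
  have fin: "finite ?U"
    using finite_sets[OF inv] by blast
  then show "finite (merged_set s \<sigma>)"
    by (simp add: merged_set_def)
  have "card ?U = (\<Sum>k<first_empty \<sigma>. card (sets \<sigma> k))"
    using finite_sets[OF inv] sets_disjoint[OF inv] by (intro card_UN_disjoint) auto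
  moreover have "s \<notin> ?U"
    using not_in_sets_if_not_in_objs[OF inv s] by blast
  ultimately have "card (merged_set s \<sigma>) = Suc (\<Sum>k<first_empty \<sigma>. card (sets \<sigma> k))"
    using fin by (simp add: merged_set_def)
  then show "card (merged_set s \<sigma>) = 2 ^ first_empty \<sigma>"
    using sum_card_sets_below_first_empty[OF inv order.refl] by simp
qed

lemma merged_set_disjoint:
  assumes "counter_invariant \<sigma>" "s \<notin> objs \<sigma>" "first_empty \<sigma> < k"
  shows "merged_set s \<sigma> \<inter> sets \<sigma> k = {}"
proof -
  have "sets \<sigma> j \<inter> sets \<sigma> k = {}" if "j < first_empty \<sigma>" for j
    using sets_disjoint[OF assms(1)] assms(3) that by simp
  then show ?thesis
    using not_in_sets_if_not_in_objs[OF assms(1,2)] by (auto simp: merged_set_def)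
qed

lemma merged_sets_disjoint:
  assumes "counter_invariant \<sigma>" "s \<notin> objs \<sigma>" "j \<noteq> k"
  shows "merged_sets s \<sigma> j \<inter> merged_sets s \<sigma> k = {}"
  using merged_set_disjoint[OF assms(1,2), of j] merged_set_disjoint[OF assms(1,2), of k]
    sets_disjoint[OF assms(1,3)] assms(3)
  by (auto simp: merged_sets_def)

lemma sum_card_merged_sets:
  assumes inv: "counter_invariant \<sigma>" and s: "s \<notin> objs \<sigma>" and j: "first_empty \<sigma> < j"
  shows "(\<Sum>k<j. card (merged_sets s \<sigma> k)) = Suc (\<Sum>k<j. card (sets \<sigma> k))"
  using j[folded Suc_le_eq]
proof (induction j rule: dec_induct)
  case base
  have "sets \<sigma> (first_empty \<sigma>) = {}"
    by (rule sets_eq_empty_if_Empty[OF inv stat_first_empty[OF inv]])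
  then show ?case
    using sum_card_sets_below_first_empty[OF inv order.refl] card_merged_set[OF inv s]
    by (simp add: merged_sets_def)
next
  case (step j)
  then show ?case by (simp add: merged_sets_def)
qed

lemma insert_step_structure:
  assumes "insert_step rel C s \<sigma> \<sigma>'"
  shows "s \<notin> objs \<sigma>"
    and "lev \<sigma>' = max (lev \<sigma>) (first_empty \<sigma>)"
    and "sets \<sigma>' = merged_sets s \<sigma>"
    and "x \<notin> merged_set s \<sigma> \<Longrightarrow> fin \<sigma>' x = fin \<sigma> x"
    and "stat \<sigma>' =
      (\<lambda>k. if merged_stat \<sigma> k = Migr \<and> miscolored \<sigma>' k = {} then Full else merged_stat \<sigma> k)"
  by (rule insert_stepE[OF assms]; blast)+

lemma card_miscolored_less_insert_step:
  assumes inv: "counter_invariant \<sigma>" and step: "insert_step rel C s \<sigma> \<sigma>'"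
    and migr: "stat \<sigma>' j = Migr"
  shows "card (miscolored \<sigma>' j) < card {x \<in> sets \<sigma>' j. ((cur \<sigma>)(s := fin \<sigma>' s)) x \<noteq> fin \<sigma>' x}"
proof -
  obtain cur1 pick where s: "s \<notin> objs \<sigma>"
    and lev': "lev \<sigma>' = max (lev \<sigma>) (first_empty \<sigma>)"
    and sets': "sets \<sigma>' = merged_sets s \<sigma>"
    and "\<And>x. x \<notin> merged_set s \<sigma> \<Longrightarrow> fin \<sigma>' x = fin \<sigma> x"
    and cur1: "cur1 = (cur \<sigma>)(s := fin \<sigma>' s)"
    and cur': "cur \<sigma>' = (\<lambda>x. if \<exists>k\<le>lev \<sigma>'. pick k = Some x then fin \<sigma>' x else cur1 x)"
    and pick_None: "\<And>k. pick k = None \<longleftrightarrow>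
       lev \<sigma>' < k \<or> merged_stat \<sigma> k \<noteq> Migr \<or> {x \<in> merged_sets s \<sigma> k. cur1 x \<noteq> fin \<sigma>' x} = {}"
    and pick_Some: "\<And>k x. pick k = Some x \<Longrightarrow> x \<in> merged_sets s \<sigma> k \<and> cur1 x \<noteq> fin \<sigma>' x"
    and stat': "stat \<sigma>' =
       (\<lambda>k. if merged_stat \<sigma> k = Migr \<and> miscolored \<sigma>' k = {} then Full else merged_stat \<sigma> k)"
    by (rule insert_stepE[OF step]) blast
  define D where "D = {x \<in> merged_sets s \<sigma> j. cur1 x \<noteq> fin \<sigma>' x}"
  have merged_migr: "merged_stat \<sigma> j = Migr" and ne: "miscolored \<sigma>' j \<noteq> {}"
    using migr stat' by (auto split: if_splits)
  have j_le: "j \<le> lev \<sigma>'"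
  proof (cases "j = first_empty \<sigma>")
    case False
    with merged_migr have "stat \<sigma> j = Migr"
      by (simp add: merged_stat_def split: if_splits)
    then have "\<not> lev \<sigma> < j"
      using stat_Empty_above_lev[OF inv] by force
    then show ?thesis
      by (simp add: lev')
  qed (simp add: lev')
  have "miscolored \<sigma>' j \<subseteq> D"
    by (auto simp: miscolored_def D_def sets' cur' split: if_splits)
  with ne have "D \<noteq> {}" by blast
  with pick_None[of j] merged_migr j_le obtain x where x: "pick j = Some x"
    by (auto simp: D_def)
  have "finite (merged_sets s \<sigma> j)"
    using finite_sets[OF inv] card_merged_set(1)[OF inv s] by (simp add: merged_sets_def)
  then show ?thesis
    unfolding miscolored_def sets' cur1[symmetric]
  proof (rule card_less_after_fixing)
    show "x \<in> merged_sets s \<sigma> j" "cur1 x \<noteq> fin \<sigma>' x" "cur \<sigma>' x = fin \<sigma>' x"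
      using pick_Some[OF x] x j_le by (auto simp: cur')
    show "\<And>y. cur \<sigma>' y = fin \<sigma>' y \<or> cur \<sigma>' y = cur1 y"
      by (simp add: cur')
  qed
qed

lemma migration_bound_insert_step:
  assumes inv: "counter_invariant \<sigma>" and step: "insert_step rel C s \<sigma> \<sigma>'"
    and migr: "stat \<sigma>' j = Migr"
  shows "miscolored \<sigma>' j \<noteq> {} \<and> card (miscolored \<sigma>' j) + (\<Sum>k<j. card (sets \<sigma>' k)) < 2 ^ j"
proof -
  note s = insert_step_structure(1)[OF step]
    and sets' = insert_step_structure(3)[OF step]
    and fin' = insert_step_structure(4)[OF step]
    and stat' = insert_step_structure(5)[OF step]
  define D where "D = {x \<in> sets \<sigma>' j. ((cur \<sigma>)(s := fin \<sigma>' s)) x \<noteq> fin \<sigma>' x}"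
  have merged_migr: "merged_stat \<sigma> j = Migr" and ne: "miscolored \<sigma>' j \<noteq> {}"
    using migr stat' by (auto split: if_splits)
  have less: "card (miscolored \<sigma>' j) < card D"
    unfolding D_def by (rule card_miscolored_less_insert_step[OF inv step migr])
  show ?thesis
  proof (cases "j = first_empty \<sigma>")
    case True
    \<comment> \<open>The new object already carries its final color.\<close>
    have "D \<subseteq> merged_set s \<sigma> - {s}"
      using True by (auto simp: D_def sets' merged_sets_def)
    then have "card D \<le> card (merged_set s \<sigma> - {s})"
      using card_merged_set(1)[OF inv s] by (intro card_mono) auto
    also have "\<dots> < 2 ^ j"
      using card_Diff1_less[OF card_merged_set(1)[OF inv s], of s] card_merged_set(2)[OF inv s] True
      by (simp add: merged_set_def)
    finally have "card D < 2 ^ j" .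
    moreover have "(\<Sum>k<j. card (sets \<sigma>' k)) = 0"
      using True by (simp add: sets' merged_sets_def)
    ultimately show ?thesis
      using ne less by simp
  next
    case False
    with merged_migr have j: "first_empty \<sigma> < j" and migr_old: "stat \<sigma> j = Migr"
      by (auto simp: merged_stat_def split: if_splits)
    have "fin \<sigma>' x = fin \<sigma> x" if "x \<in> sets \<sigma> j" for x
      using fin' merged_set_disjoint[OF inv s j] that by blast
    then have "D = miscolored \<sigma> j"
      using not_in_sets_if_not_in_objs[OF inv s, of j] j
      by (auto simp: D_def miscolored_def sets' merged_sets_def)
    moreover have "card (miscolored \<sigma> j) + (\<Sum>k<j. card (sets \<sigma> k)) < 2 ^ j"
      using migrating_backlog[OF inv migr_old] by simp
    ultimately show ?thesis
      using ne less sum_card_merged_sets[OF inv s j] by (simp add: sets')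
  qed
qed

lemma counter_invariant_insert_step:
  assumes inv: "counter_invariant \<sigma>" and step: "insert_step rel C s \<sigma> \<sigma>'"
  shows "counter_invariant \<sigma>'"
proof -
  note s = insert_step_structure(1)[OF step]
    and lev' = insert_step_structure(2)[OF step]
    and sets' = insert_step_structure(3)[OF step]
    and stat' = insert_step_structure(5)[OF step]
  have empty_iff: "stat \<sigma>' j = Empty \<longleftrightarrow> merged_stat \<sigma> j = Empty" for j
    by (simp add: stat')
  have "stat \<sigma>' j = Empty \<Longrightarrow> sets \<sigma>' j = {}" for j
    using sets_eq_empty_if_Empty[OF inv, of j]
    by (cases j "first_empty \<sigma>" rule: linorder_cases)
      (simp_all add: empty_iff sets' merged_stat_def merged_sets_def)
  moreover have "stat \<sigma>' j \<noteq> Empty \<Longrightarrow> finite (sets \<sigma>' j) \<and> card (sets \<sigma>' j) = 2 ^ j" for j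
    using finite_sets[OF inv, of j] card_sets_if_not_Empty[OF inv, of j] card_merged_set[OF inv s]
    by (cases j "first_empty \<sigma>" rule: linorder_cases)
      (simp_all add: empty_iff sets' merged_stat_def merged_sets_def)
  moreover have "lev \<sigma>' < j \<Longrightarrow> stat \<sigma>' j = Empty" for j
    using stat_Empty_above_lev[OF inv, of j] by (simp add: empty_iff lev' merged_stat_def)
  moreover have "j \<noteq> k \<Longrightarrow> sets \<sigma>' j \<inter> sets \<sigma>' k = {}" for j k
    using merged_sets_disjoint[OF inv s] by (simp add: sets')
  moreover note migration_bound_insert_step[OF inv step]
  ultimately show ?thesis
    unfolding counter_invariant_def by blast
qed

lemma counter_invariant_reachable:
  assumes "reachable rel C n \<sigma>"
  shows "counter_invariant \<sigma>"
  using assms unfolding reachable_def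
proof (induction rule: rtranclp_induct)
  case base
  show ?case by (rule counter_invariant_init_st)
next
  case (step \<sigma> \<sigma>')
  then show ?case by (blast intro: counter_invariant_insert_step)
qed

theorem mainTheorem8:
  fixes rel :: "'q \<Rightarrow> 'a \<Rightarrow> bool"
    and gamma :: "nat \<Rightarrow> nat"
    and C :: "nat \<Rightarrow> nat \<Rightarrow> int set"
    and n :: nat
  assumes "mono gamma"
    and "\<And>X :: 'a set. finite X \<Longrightarrow> \<exists>c. unimax rel X c \<and> card (c ` X) \<le> gamma (card X)"
    and "\<And>i t. finite (C i t) \<and> card (C i t) = gamma (2 ^ i)"
    and "reachable rel C n \<sigma>"
  shows "\<forall>j < first_empty \<sigma>. stat \<sigma> j = Full"
proof -
  have "counter_invariant \<sigma>"
    using assms(4) by (rule counter_invariant_reachable)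
  then show ?thesis
    by (blast intro: full_below_first_empty)
qed

end
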